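(* Let $c$ be a constant. For unknowns $\vec S_n(t),\bar{\vec S}_n(t)\in\mathbb{C}^m$ and $v_n(t)\in\mathbb{C}$ ($n\in\mathbb{Z}$), consider the discrete multicomponent Yajima--Oikawa system \begin{align*} \mathrm{i}\,\vec S_{n,t}&=v_n(\vec S_{n+1}+\vec S_{n-1})-c\,\vec S_n,\\ \mathrm{i}\,\bar{\vec S}_{n,t}&=-v_n(\bar{\vec S}_{n+1}+\bar{\vec S}_{n-1})+c\,\bar{\vec S}_n,\\ v_{n,t}&=\tfrac12 v_n\,\Delta_n^+\big(\langle\vec S_n,\bar{\vec S}_{n-1}\rangle+\langle\vec S_{n-1},\bar{\vec S}_n\rangle\big). \end{align*} Consider the linear problem for a scalar $\psi_n$ and column vectors $\vec\phi_n,\vec\chi_n\in\mathbb{C}^m$ with constant spectral parameter $\lambda$: \begin{align*} v_n(\psi_{n+1}+\psi_{n-1})&=\lambda\psi_n-\langle\vec S_n,\vec\phi_n\rangle-\langle\vec\chi_n,\bar{\vec S}_n\rangle,\\ \vec\phi_{n+1}-\vec\phi_n&=\tfrac{\mathrm{i}}{2}\bar{\vec S}_n(\psi_{n+1}+\psi_{n-1}),\\ \vec\chi_{n+1}+\vec\chi_n&=\tfrac{\mathrm{i}}{2}\vec S_n(\psi_{n+1}+\psi_{n-1}), \end{align*} together with the time evolution \begin{align*} \mathrm{i}\,\psi_{n,t}&=v_n(\psi_{n+1}+\psi_{n-1})-c\,\psi_n,\\ \vec\phi_{n,t}&=\tfrac12 v_n\bar{\vec S}_{n-1}(\psi_{n+1}+\psi_{n-1})-\tfrac12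 v_{n-1}\bar{\vec S}_n(\psi_n+\psi_{n-2}),\\ \vec\chi_{n,t}&=\tfrac12 v_n\vec S_{n-1}(\psi_{n+1}+\psi_{n-1})+\tfrac12 v_{n-1}\vec S_n(\psi_n+\psi_{n-2})+2\mathrm{i}c\,\vec\chi_n. \end{align*} Then the compatibility condition of these overdetermined linear equations (i.e., the requirement that the $t$-derivatives of the three spatial equations, computed using the time-evolution equations and the first spatial equation to eliminate the time derivatives and $\lambda$, hold identically for arbitrary values of $\psi_n,\vec\phi_n,\vec\chi_n$) is equivalent to the discrete multicomponent Yajima--Oikawa system above.
   Context: Here $n\in\mathbb{Z}$ is the lattice site and $t$ is time; subscript $t$ denotes $\partial/\partial t$. $\langle\vec a,\vec b\rangle=\sum_{i=1}^m a^{(i)}b^{(i)}$ is the standard bilinear scalar product (no complex conjugation). $\Delta_n^+$ is the forward difference operator, $\Delta_n^+f_n:=f_{n+1}-f_n$. The product of a scalar and a column vector is written in either order. $\bar{\vec S}_n$ is an independent vector variable (not necessarily related to the complex conjugate of $\vec S_n$). *)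

theory Defs
  imports "HOL-Analysis.Analysis"
begin

definition bil :: "complex^'m \<Rightarrow> complex^'m \<Rightarrow> complex" where
  "bil a b = (\<Sum>i\<in>UNIV. a$i * b$i)"

text \<open>The discrete multicomponent Yajima--Oikawa system at one instant:
  S, Sb, v are the fields at that instant, St, Sbt, vt their time derivatives.\<close>
definition dYO_system ::
  "complex \<Rightarrow> (int \<Rightarrow> complex^'m) \<Rightarrow> (int \<Rightarrow> complex^'m) \<Rightarrow> (int \<Rightarrow> complex)
   \<Rightarrow> (int \<Rightarrow> complex^'m) \<Rightarrow> (int \<Rightarrow> complex^'m) \<Rightarrow> (int \<Rightarrow> complex) \<Rightarrow> bool" where
  "dYO_system c S Sb v St Sbt vt \<longleftrightarrow>
     (\<forall>n. \<i> *s St n = v n *s (S (n+1) + S (n-1)) - c *s S n) \<and>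
     (\<forall>n. \<i> *s Sbt n = - (v n *s (Sb (n+1) + Sb (n-1))) + c *s Sb n) \<and>
     (\<forall>n. vt n = 1/2 * v n *
            ((bil (S (n+1)) (Sb n) + bil (S n) (Sb (n+1)))
             - (bil (S n) (Sb (n-1)) + bil (S (n-1)) (Sb n))))"

definition psi_t :: "complex \<Rightarrow> (int \<Rightarrow> complex) \<Rightarrow> (int \<Rightarrow> complex) \<Rightarrow> int \<Rightarrow> complex" where
  "psi_t c v ps k = - \<i> * (v k * (ps (k+1) + ps (k-1)) - c * ps k)"

definition phi_t :: "(int \<Rightarrow> complex^'m) \<Rightarrow> (int \<Rightarrow> complex) \<Rightarrow> (int \<Rightarrow> complex) \<Rightarrow> int \<Rightarrow> complex^'m" where
  "phi_t Sb v ps k =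
     (1/2 * v k * (ps (k+1) + ps (k-1))) *s Sb (k-1)
   - (1/2 * v (k-1) * (ps k + ps (k-2))) *s Sb k"

definition chi_t :: "complex \<Rightarrow> (int \<Rightarrow> complex^'m) \<Rightarrow> (int \<Rightarrow> complex) \<Rightarrow> (int \<Rightarrow> complex)
     \<Rightarrow> (int \<Rightarrow> complex^'m) \<Rightarrow> int \<Rightarrow> complex^'m" where
  "chi_t c S v ps ch k =
     (1/2 * v k * (ps (k+1) + ps (k-1))) *s S (k-1)
   + (1/2 * v (k-1) * (ps k + ps (k-2))) *s S k
   + (2 * \<i> * c) *s ch k"

text \<open>lambda * psi_k, eliminated via the first spatial equation.\<close>
definition lam_psi :: "(int \<Rightarrow> complex^'m) \<Rightarrow> (int \<Rightarrow> complex^'m) \<Rightarrow> (int \<Rightarrow> complex)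
     \<Rightarrow> (int \<Rightarrow> complex) \<Rightarrow> (int \<Rightarrow> complex^'m) \<Rightarrow> (int \<Rightarrow> complex^'m) \<Rightarrow> int \<Rightarrow> complex" where
  "lam_psi S Sb v ps ph ch k =
     v k * (ps (k+1) + ps (k-1)) + bil (S k) (ph k) + bil (ch k) (Sb k)"

text \<open>Compatibility condition at one instant: for arbitrary psi, phi, chi
  (related only by the second and third spatial equations, which merely express
  phi_{n+-1}, chi_{n+-1} through phi_n, chi_n and psi), the time derivatives of the
  three spatial equations hold identically, after replacing psi_t, phi_t, chi_t by
  the time evolution and lambda*psi_k by the first spatial equation.\<close>
definition dYO_compat ::
  "complex \<Rightarrow> (int \<Rightarrow> complex^'m) \<Rightarrow> (int \<Rightarrow> complex^'m) \<Rightarrow> (int \<Rightarrow> complex)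
   \<Rightarrow> (int \<Rightarrow> complex^'m) \<Rightarrow> (int \<Rightarrow> complex^'m) \<Rightarrow> (int \<Rightarrow> complex) \<Rightarrow> bool" where
  "dYO_compat c S Sb v St Sbt vt \<longleftrightarrow>
    (\<forall>(ps::int \<Rightarrow> complex) (ph::int \<Rightarrow> complex^'m) (ch::int \<Rightarrow> complex^'m).
      (\<forall>k. ph (k+1) - ph k = (\<i>/2 * (ps (k+1) + ps (k-1))) *s Sb k) \<and>
      (\<forall>k. ch (k+1) + ch k = (\<i>/2 * (ps (k+1) + ps (k-1))) *s S k) \<longrightarrow>
      (\<forall>n.
        vt n * (ps (n+1) + ps (n-1)) + v n * (psi_t c v ps (n+1) + psi_t c v ps (n-1))
          = - \<i> * (v n * (lam_psi S Sb v ps ph ch (n+1) + lam_psi S Sb v ps ph ch (n-1))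
                   - c * lam_psi S Sb v ps ph ch n)
            - bil (St n) (ph n) - bil (S n) (phi_t Sb v ps n)
            - bil (chi_t c S v ps ch n) (Sb n) - bil (ch n) (Sbt n)
        \<and>
        phi_t Sb v ps (n+1) - phi_t Sb v ps n
          = (\<i>/2 * (ps (n+1) + ps (n-1))) *s Sbt n
            + (\<i>/2 * (psi_t c v ps (n+1) + psi_t c v ps (n-1))) *s Sb n
        \<and>
        chi_t c S v ps ch (n+1) + chi_t c S v ps ch n
          = (\<i>/2 * (ps (n+1) + ps (n-1))) *s St n
            + (\<i>/2 * (psi_t c v ps (n+1) + psi_t c v ps (n-1))) *s S n))"

end

theory Submission
  imports Defs
begin

text \<open>Both sides of the equivalence involve the fields and their time derivatives only at the
  instant t (the differentiability hypotheses merely give St, Sbt, vt their meaning), so the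
  statement is algebraic: the compatibility defects of
  the linear problem are linear combinations of the defects of the Yajima--Oikawa equations,
  with coefficients built from the free data psi, phi, chi. Conversely, testing the compatibility
  condition against suitable constant, alternating and localised psi, phi, chi isolates each
  equation of the system; such data exist because the difference equations phi_{k+1} - phi_k = a_k
  and chi_{k+1} + chi_k = b_k are solvable on \<int> for every right-hand side.\<close>

lemma bil_simps:
  "bil (a + b) d = bil a d + bil b d"
  "bil a (b + d) = bil a b + bil a d"
  "bil (a - b) d = bil a d - bil b d"
  "bil a (b - d) = bil a b - bil a d"
  "bil (- a) d = - bil a d"
  "bil a (- d) = - bil a d"
  "bil (x *s a) d = x * bil a d"
  "bil a (x *s d) = x * bil a d"
  "bil 0 d = 0"
  "bil a 0 = 0"
  by (simp_all add: bil_def sum.distrib sum_subtractf sum_negf sum_distrib_left algebra_simps)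

lemma bil_axis: "bil a (axis j 1) = a $ j" "bil (axis j 1) a = a $ j"
  by (simp_all add: bil_def axis_def if_distrib[of "times _"] if_distrib[of "\<lambda>x. x * _"]
      cong: if_cong)

lemma ii_scale_eq_iff: "\<i> *s (x :: complex^'m) = y \<longleftrightarrow> x = (- \<i>) *s y"
  by (auto simp: vector_smult_assoc)

lemma int_antidifference_exists:
  fixes a :: "int \<Rightarrow> 'a::ab_group_add"
  shows "\<exists>f. \<forall>k. f (k + 1) - f k = a k"
proof -
  define f where "f k = (if 0 \<le> k then sum a {0..<k} else - sum a {k..<0})" for k
  have "f (k + 1) - f k = a k" for k
  proof (cases "0 \<le> k")
    case True
    then have "{0..<k + 1} = insert k {0..<k}" by auto
    with True show ?thesis by (simp add: f_def)
  next
    case False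
    show ?thesis
    proof (cases "k = -1")
      case True
      moreover have "{-1..<0::int} = {-1}" by auto
      ultimately show ?thesis by (simp add: f_def)
    next
      case False
      with \<open>\<not> 0 \<le> k\<close> have "{k..<0} = insert k {k + 1..<0}" by auto
      with \<open>\<not> 0 \<le> k\<close> False show ?thesis by (simp add: f_def)
    qed
  qed
  then show ?thesis by blast
qed

lemma int_antisum_exists:
  fixes b :: "int \<Rightarrow> 'a::ab_group_add"
  shows "\<exists>g. \<forall>k. g (k + 1) + g k = b k"
proof -
  define alt :: "int \<Rightarrow> 'a \<Rightarrow> 'a" where "alt k x = (if even k then x else - x)" for k x
  obtain f where f: "\<And>k. f (k + 1) - f k = alt (k + 1) (b k)"
    using int_antidifference_exists[of "\<lambda>k. alt (k + 1) (b k)"] by blast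
  have "alt (k + 1) (f (k + 1)) + alt k (f k) = alt (k + 1) (f (k + 1) - f k)" for k
    by (simp add: alt_def)
  then have "alt (k + 1) (f (k + 1)) + alt k (f k) = b k" for k
    by (simp add: f alt_def)
  then show ?thesis by (intro exI[of _ "\<lambda>k. alt k (f k)"]) blast
qed

type_synonym 'm lattice_vec = "int \<Rightarrow> complex^'m"
type_synonym lattice_scalar = "int \<Rightarrow> complex"

definition dYO_St :: "complex \<Rightarrow> ('m::finite) lattice_vec \<Rightarrow> lattice_scalar \<Rightarrow> int \<Rightarrow> complex^'m"
  where "dYO_St c S v n = (- \<i>) *s (v n *s (S (n + 1) + S (n - 1)) - c *s S n)"

definition dYO_Sbt :: "complex \<Rightarrow> ('m::finite) lattice_vec \<Rightarrow> lattice_scalar \<Rightarrow> int \<Rightarrow> complex^'m"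
  where "dYO_Sbt c Sb v n = (- \<i>) *s (- (v n *s (Sb (n + 1) + Sb (n - 1))) + c *s Sb n)"

definition dYO_vt ::
  "('m::finite) lattice_vec \<Rightarrow> 'm lattice_vec \<Rightarrow> lattice_scalar \<Rightarrow> int \<Rightarrow> complex"
  where "dYO_vt S Sb v n = 1/2 * v n *
     ((bil (S (n + 1)) (Sb n) + bil (S n) (Sb (n + 1))) - (bil (S n) (Sb (n - 1)) + bil (S (n - 1)) (Sb n)))"

lemma dYO_system_iff:
  "dYO_system c S Sb v St Sbt vt \<longleftrightarrow>
     (\<forall>n. St n = dYO_St c S v n) \<and> (\<forall>n. Sbt n = dYO_Sbt c Sb v n) \<and> (\<forall>n. vt n = dYO_vt S Sb v n)"
  by (simp add: dYO_system_def dYO_St_def dYO_Sbt_def dYO_vt_def ii_scale_eq_iff)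

definition spatial_constraints ::
  "('m::finite) lattice_vec \<Rightarrow> 'm lattice_vec \<Rightarrow> lattice_scalar
     \<Rightarrow> 'm lattice_vec \<Rightarrow> 'm lattice_vec \<Rightarrow> bool" where
  "spatial_constraints S Sb ps ph ch \<longleftrightarrow>
     (\<forall>k. ph (k + 1) - ph k = (\<i>/2 * (ps (k + 1) + ps (k - 1))) *s Sb k) \<and>
     (\<forall>k. ch (k + 1) + ch k = (\<i>/2 * (ps (k + 1) + ps (k - 1))) *s S k)"

lemma spatial_constraints_neighbours:
  assumes "spatial_constraints S Sb ps ph ch"
  shows "ph (n + 1) = ph n + (\<i>/2 * (ps (n + 1) + ps (n - 1))) *s Sb n"
    and "ph (n - 1) = ph n - (\<i>/2 * (ps n + ps (n - 2))) *s Sb (n - 1)"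
    and "ch (n + 1) = - ch n + (\<i>/2 * (ps (n + 1) + ps (n - 1))) *s S n"
    and "ch (n - 1) = - ch n + (\<i>/2 * (ps n + ps (n - 2))) *s S (n - 1)"
proof -
  have shift: "n - 1 + 1 = n" "n - 1 - 1 = n - 2" by simp_all
  note phi = assms[unfolded spatial_constraints_def, THEN conjunct1, rule_format]
  note chi = assms[unfolded spatial_constraints_def, THEN conjunct2, rule_format]
  show "ph (n + 1) = ph n + (\<i>/2 * (ps (n + 1) + ps (n - 1))) *s Sb n"
    using phi[of n] by (simp add: algebra_simps)
  show "ph (n - 1) = ph n - (\<i>/2 * (ps n + ps (n - 2))) *s Sb (n - 1)"
    using phi[of "n - 1"] unfolding shift by (simp add: algebra_simps)
  show "ch (n + 1) = - ch n + (\<i>/2 * (ps (n + 1) + ps (n - 1))) *s S n"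
    using chi[of n] by (simp add: algebra_simps)
  show "ch (n - 1) = - ch n + (\<i>/2 * (ps n + ps (n - 2))) *s S (n - 1)"
    using chi[of "n - 1"] unfolding shift by (simp add: algebra_simps)
qed

definition psi_defect ::
  "complex \<Rightarrow> ('m::finite) lattice_vec \<Rightarrow> 'm lattice_vec \<Rightarrow> lattice_scalar \<Rightarrow> 'm lattice_vec
     \<Rightarrow> 'm lattice_vec \<Rightarrow> lattice_scalar \<Rightarrow> lattice_scalar \<Rightarrow> 'm lattice_vec
     \<Rightarrow> 'm lattice_vec \<Rightarrow> int \<Rightarrow> complex" where
  "psi_defect c S Sb v St Sbt vt ps ph ch n =
     vt n * (ps (n + 1) + ps (n - 1)) + v n * (psi_t c v ps (n + 1) + psi_t c v ps (n - 1))
     - (- \<i> * (v n * (lam_psi S Sb v ps ph ch (n + 1) + lam_psi S Sb v ps ph ch (n - 1))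
               - c * lam_psi S Sb v ps ph ch n)
        - bil (St n) (ph n) - bil (S n) (phi_t Sb v ps n)
        - bil (chi_t c S v ps ch n) (Sb n) - bil (ch n) (Sbt n))"

definition phi_defect ::
  "complex \<Rightarrow> ('m::finite) lattice_vec \<Rightarrow> lattice_scalar \<Rightarrow> 'm lattice_vec \<Rightarrow> lattice_scalar
     \<Rightarrow> int \<Rightarrow> complex^'m" where
  "phi_defect c Sb v Sbt ps n =
     phi_t Sb v ps (n + 1) - phi_t Sb v ps n
     - ((\<i>/2 * (ps (n + 1) + ps (n - 1))) *s Sbt n
        + (\<i>/2 * (psi_t c v ps (n + 1) + psi_t c v ps (n - 1))) *s Sb n)"

definition chi_defect ::
  "complex \<Rightarrow> ('m::finite) lattice_vec \<Rightarrow> lattice_scalar \<Rightarrow> 'm lattice_vec \<Rightarrow> lattice_scalar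
     \<Rightarrow> 'm lattice_vec \<Rightarrow> int \<Rightarrow> complex^'m" where
  "chi_defect c S v St ps ch n =
     chi_t c S v ps ch (n + 1) + chi_t c S v ps ch n
     - ((\<i>/2 * (ps (n + 1) + ps (n - 1))) *s St n
        + (\<i>/2 * (psi_t c v ps (n + 1) + psi_t c v ps (n - 1))) *s S n)"

lemma dYO_compat_iff_defects:
  "dYO_compat c S Sb v St Sbt vt \<longleftrightarrow>
     (\<forall>ps ph ch. spatial_constraints S Sb ps ph ch \<longrightarrow>
        (\<forall>n. psi_defect c S Sb v St Sbt vt ps ph ch n = 0 \<and>
             phi_defect c Sb v Sbt ps n = 0 \<and> chi_defect c S v St ps ch n = 0))"
  unfolding dYO_compat_def spatial_constraints_def psi_defect_def phi_defect_def chi_defect_def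
  by simp

lemma psi_defect_eq:
  assumes "spatial_constraints S Sb ps ph ch"
  shows "psi_defect c S Sb v St Sbt vt ps ph ch n =
      (ps (n + 1) + ps (n - 1)) * (vt n - dYO_vt S Sb v n)
      + bil (St n - dYO_St c S v n) (ph n) + bil (ch n) (Sbt n - dYO_Sbt c Sb v n)"
proof -
  have shift: "n - 1 + 1 = n" "n + 1 - 1 = n" "n - 1 - 1 = n - 2" "n + 1 + 1 = n + 2"
    by simp_all
  show ?thesis
    unfolding psi_defect_def psi_t_def phi_t_def chi_t_def lam_psi_def dYO_vt_def dYO_St_def
      dYO_Sbt_def shift spatial_constraints_neighbours[OF assms] bil_simps
    by (simp add: field_simps)
qed

lemma phi_defect_eq:
  "phi_defect c Sb v Sbt ps n = - (\<i>/2 * (ps (n + 1) + ps (n - 1))) *s (Sbt n - dYO_Sbt c Sb v n)"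
proof -
  have shift: "n - 1 + 1 = n" "n + 1 - 1 = n" "n - 1 - 1 = n - 2" "n + 1 + 1 = n + 2"
    by simp_all
  show ?thesis
    unfolding phi_defect_def psi_t_def phi_t_def dYO_Sbt_def shift
    by (simp add: vec_eq_iff field_simps)
qed

lemma chi_defect_eq:
  assumes "spatial_constraints S Sb ps ph ch"
  shows "chi_defect c S v St ps ch n = - (\<i>/2 * (ps (n + 1) + ps (n - 1))) *s (St n - dYO_St c S v n)"
proof -
  have shift: "n - 1 + 1 = n" "n + 1 - 1 = n" "n - 1 - 1 = n - 2" "n + 1 + 1 = n + 2"
    by simp_all
  show ?thesis
    unfolding chi_defect_def chi_t_def psi_t_def dYO_St_def shift
      spatial_constraints_neighbours(3)[OF assms]
    by (simp add: vec_eq_iff field_simps)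
qed

lemma dYO_system_of_psi_defect_vanishing:
  fixes S Sb St Sbt :: "'m::finite lattice_vec"
  assumes vanish: "\<And>ps ph ch n. spatial_constraints S Sb ps ph ch \<Longrightarrow>
      psi_defect c S Sb v St Sbt vt ps ph ch n = 0"
  shows "dYO_system c S Sb v St Sbt vt"
proof -
  have St: "St n = dYO_St c S v n" for n
  proof -
    have "(St n - dYO_St c S v n) $ j = 0" for j
    proof -
      have "spatial_constraints S Sb (\<lambda>_. 0) (\<lambda>_. axis j 1) (\<lambda>_. 0)"
        by (simp add: spatial_constraints_def)
      from psi_defect_eq[OF this] vanish[OF this] show ?thesis
        by (simp add: bil_axis bil_simps)
    qed
    then show ?thesis by (simp add: vec_eq_iff)
  qed
  have Sbt: "Sbt n = dYO_Sbt c Sb v n" for n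
  proof -
    have "(Sbt n - dYO_Sbt c Sb v n) $ j = 0" for j
    proof -
      define ch :: "'m lattice_vec" where "ch k = (if even k then axis j 1 else - axis j 1)" for k
      have "spatial_constraints S Sb (\<lambda>_. 0) (\<lambda>_. 0) ch"
        by (simp add: spatial_constraints_def ch_def)
      from psi_defect_eq[OF this] vanish[OF this]
      have "bil (ch n) (Sbt n - dYO_Sbt c Sb v n) = 0" by (simp add: bil_simps)
      then show ?thesis by (cases "even n") (simp_all add: ch_def bil_axis bil_simps)
    qed
    then show ?thesis by (simp add: vec_eq_iff)
  qed
  have vt: "vt n = dYO_vt S Sb v n" for n
  proof -
    define ps where "ps k = (if k = n + 1 then 1 else 0 :: complex)" for k
    obtain ph where "\<forall>k. ph (k + 1) - ph k = (\<i>/2 * (ps (k + 1) + ps (k - 1))) *s Sb k"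
      using int_antidifference_exists[of "\<lambda>k. (\<i>/2 * (ps (k + 1) + ps (k - 1))) *s Sb k"] by blast
    moreover obtain ch where "\<forall>k. ch (k + 1) + ch k = (\<i>/2 * (ps (k + 1) + ps (k - 1))) *s S k"
      using int_antisum_exists[of "\<lambda>k. (\<i>/2 * (ps (k + 1) + ps (k - 1))) *s S k"] by blast
    ultimately have sc: "spatial_constraints S Sb ps ph ch"
      by (simp add: spatial_constraints_def)
    have "ps (n + 1) + ps (n - 1) = 1" by (simp add: ps_def)
    then have "psi_defect c S Sb v St Sbt vt ps ph ch n = vt n - dYO_vt S Sb v n"
      by (simp add: psi_defect_eq[OF sc] St Sbt bil_simps)
    with vanish[OF sc] show ?thesis by simp
  qed
  from St Sbt vt show ?thesis by (simp add: dYO_system_iff)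
qed

lemma dYO_compat_iff_system:
  "dYO_compat c S Sb v St Sbt vt \<longleftrightarrow> dYO_system c S Sb v St Sbt vt"
proof
  assume "dYO_compat c S Sb v St Sbt vt"
  then show "dYO_system c S Sb v St Sbt vt"
    by (intro dYO_system_of_psi_defect_vanishing) (simp add: dYO_compat_iff_defects)
next
  assume "dYO_system c S Sb v St Sbt vt"
  then show "dYO_compat c S Sb v St Sbt vt"
    by (simp add: dYO_system_iff dYO_compat_iff_defects psi_defect_eq phi_defect_eq chi_defect_eq
        bil_simps)
qed

theorem proposition2p1:
  fixes c :: complex
    and S Sb :: "real \<Rightarrow> int \<Rightarrow> complex^'m"
    and v :: "real \<Rightarrow> int \<Rightarrow> complex"
    and St Sbt :: "real \<Rightarrow> int \<Rightarrow> complex^'m"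
    and vt :: "real \<Rightarrow> int \<Rightarrow> complex"
    and t :: real
  assumes "\<And>n. ((\<lambda>s. S s n) has_vector_derivative St t n) (at t)"
    and "\<And>n. ((\<lambda>s. Sb s n) has_vector_derivative Sbt t n) (at t)"
    and "\<And>n. ((\<lambda>s. v s n) has_vector_derivative vt t n) (at t)"
  shows "dYO_compat c (S t) (Sb t) (v t) (St t) (Sbt t) (vt t)
     \<longleftrightarrow> dYO_system c (S t) (Sb t) (v t) (St t) (Sbt t) (vt t)"
  by (rule dYO_compat_iff_system)

end
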